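(* Let $f,g$ be test quantities and $\phi$ a posterior family for a model $\pi$ with data space $Y$ and parameter space $\Theta$, and let $h_y:\mathbb{R}\to\mathbb{R}$, $y\in Y$, be measurable functions with $f(\theta,y)=h_y(g(\theta,y))$ for all $y\in Y$, $\theta\in\Theta$. If either $h_y$ is strictly increasing for all $y\in Y$, or $h_y$ is strictly decreasing for all $y\in Y$, then (1) $\phi$ passes continuous SBC with respect to $f$ if and only if $\phi$ passes continuous SBC with respect to $g$; and (2) for every $M\in\mathbb{N}$, $\phi$ passes $M$-sample SBC with respect to $f$ if and only if $\phi$ passes $M$-sample SBC with respect to $g$.
   Context: Model $\pi$: prior density $\pi_{\text{prior}}(\theta)$ on $\Theta$, observation density $\pi_{\text{obs}}(y\mid\theta)$ on $Y$, $\pi_{\text{marg}}(y)=\int_\Theta\pi_{\text{obs}}(y\mid\theta)\pi_{\text{prior}}(\theta)\,\mathrm{d}\theta$, $\pi_{\text{post}}(\theta\mid y)=\pi_{\text{obs}}(y\mid\theta)\pi_{\text{prior}}(\theta)/\pi_{\text{marg}}(y)$. A posterior family is $\phi:\Theta\times Y\to\mathbb{R}^+$ with $\int_\Theta\phi(\theta\mid y)\,\mathrm{d}\theta=1$ for all $y$; a test quantity is a measurable $f:\Theta\times Y\to\mathbb{R}$. Sample quantities: for $M\in\mathbb{N}$, $\theta_1,\dots,\theta_M$ i.i.d. from $\phi(\cdot\mid y)$, $N^{\mathtt{less}}=\sum_m\mathbb{I}[f(\theta_m,y)<f(\tilde\theta,y)]$, $N^{\mathtt{equals}}=\sum_m\mathbb{I}[f(\theta_m,y)=f(\tilde\theta,y)]$,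 $K$ uniform on $\{0,\dots,N^{\mathtt{equals}}\}$, $N^{\mathtt{total}}=N^{\mathtt{less}}+K$; $R_{\phi,f}(i\mid\tilde\theta,y)=\Pr(N^{\mathtt{total}}\le i)$; $Q_{\phi,f}(i\mid y)=\int_\Theta\pi_{\text{post}}(\tilde\theta\mid y)R_{\phi,f}(i\mid\tilde\theta,y)\,\mathrm{d}\tilde\theta$; $\phi$ passes $M$-sample SBC w.r.t. $f$ if $\int_YQ_{\phi,f}(i\mid y)\pi_{\text{marg}}(y)\,\mathrm{d}y=\frac{i+1}{M+1}$ for all $i\in\{0,\dots,M-1\}$. Continuous quantities: $C_{\phi,f}(s\mid y)=\int_\Theta\mathbb{I}[f(\theta,y)\le s]\phi(\theta\mid y)\,\mathrm{d}\theta$, $D_{\phi,f}(s\mid y)=\int_\Theta\mathbb{I}[f(\theta,y)=s]\phi(\theta\mid y)\,\mathrm{d}\theta$; with $U\sim\mathrm{uniform}[0,1]$, $r_{\phi,f}(x\mid\tilde\theta,y)=\Pr\big(C_{\phi,f}(f(\tilde\theta,y)\mid y)-U\,D_{\phi,f}(f(\tilde\theta,y)\mid y)\le x\big)$, $q_{\phi,f}(x\mid y)=\int_\Theta\pi_{\text{post}}(\tilde\theta\mid y)r_{\phi,f}(x\mid\tilde\theta,y)\,\mathrm{d}\tilde\theta$; $\phi$ passes continuous SBC w.r.t. $f$ if $\int_Yq_{\phi,f}(x\mid y)\pi_{\text{marg}}(y)\,\mathrm{d}y=x$ for all $x\in[0,1]$. *)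

theory Defs
  imports "HOL-Probability.Probability"
begin

(* Model: base measures Theta (for d theta) and Y (for d y),
   prior density  prior :: 'a => real,
   observation density obs y theta = pi_obs(y | theta),
   posterior family phi theta y = phi(theta | y),
   test quantity f theta y. *)

definition marg :: "'a measure \<Rightarrow> ('a \<Rightarrow> real) \<Rightarrow> ('b \<Rightarrow> 'a \<Rightarrow> real) \<Rightarrow> 'b \<Rightarrow> real" where
  "marg Th prior obs y = (\<integral>\<theta>. obs y \<theta> * prior \<theta> \<partial>Th)"

definition post :: "'a measure \<Rightarrow> ('a \<Rightarrow> real) \<Rightarrow> ('b \<Rightarrow> 'a \<Rightarrow> real) \<Rightarrow> 'a \<Rightarrow> 'b \<Rightarrow> real" where
  "post Th prior obs \<theta> y = obs y \<theta> * prior \<theta> / marg Th prior obs y"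

definition N_less :: "nat \<Rightarrow> ('a \<Rightarrow> 'b \<Rightarrow> real) \<Rightarrow> (nat \<Rightarrow> 'a) \<Rightarrow> 'a \<Rightarrow> 'b \<Rightarrow> nat" where
  "N_less M f \<theta>s \<theta>t y = card {m \<in> {..<M}. f (\<theta>s m) y < f \<theta>t y}"

definition N_equals :: "nat \<Rightarrow> ('a \<Rightarrow> 'b \<Rightarrow> real) \<Rightarrow> (nat \<Rightarrow> 'a) \<Rightarrow> 'a \<Rightarrow> 'b \<Rightarrow> nat" where
  "N_equals M f \<theta>s \<theta>t y = card {m \<in> {..<M}. f (\<theta>s m) y = f \<theta>t y}"

definition sample_measure :: "'a measure \<Rightarrow> ('a \<Rightarrow> 'b \<Rightarrow> real) \<Rightarrow> nat \<Rightarrow> 'b \<Rightarrow> (nat \<Rightarrow> 'a) measure" where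
  "sample_measure Th \<phi> M y = PiM {..<M} (\<lambda>_. density Th (\<lambda>\<theta>. ennreal (\<phi> \<theta> y)))"

definition R_SBC :: "'a measure \<Rightarrow> ('a \<Rightarrow> 'b \<Rightarrow> real) \<Rightarrow> ('a \<Rightarrow> 'b \<Rightarrow> real) \<Rightarrow> nat \<Rightarrow> nat \<Rightarrow> 'a \<Rightarrow> 'b \<Rightarrow> real" where
  "R_SBC Th \<phi> f M i \<theta>t y =
     (\<integral>\<theta>s. measure_pmf.prob (pmf_of_set {0..N_equals M f \<theta>s \<theta>t y})
                {k. N_less M f \<theta>s \<theta>t y + k \<le> i} \<partial>(sample_measure Th \<phi> M y))"

definition Q_SBC :: "'a measure \<Rightarrow> ('a \<Rightarrow> real) \<Rightarrow> ('b \<Rightarrow> 'a \<Rightarrow> real) \<Rightarrow> ('a \<Rightarrow> 'b \<Rightarrow> real) \<Rightarrow> ('a \<Rightarrow> 'b \<Rightarrow> real) \<Rightarrow> nat \<Rightarrow> nat \<Rightarrow> 'b \<Rightarrow> real" where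
  "Q_SBC Th prior obs \<phi> f M i y = (\<integral>\<theta>t. post Th prior obs \<theta>t y * R_SBC Th \<phi> f M i \<theta>t y \<partial>Th)"

definition passes_M_SBC :: "'a measure \<Rightarrow> 'b measure \<Rightarrow> ('a \<Rightarrow> real) \<Rightarrow> ('b \<Rightarrow> 'a \<Rightarrow> real) \<Rightarrow> ('a \<Rightarrow> 'b \<Rightarrow> real) \<Rightarrow> nat \<Rightarrow> ('a \<Rightarrow> 'b \<Rightarrow> real) \<Rightarrow> bool" where
  "passes_M_SBC Th Y prior obs \<phi> M f \<longleftrightarrow>
     (\<forall>i < M. (\<integral>y. Q_SBC Th prior obs \<phi> f M i y * marg Th prior obs y \<partial>Y) = (real i + 1) / (real M + 1))"

definition C_SBC :: "'a measure \<Rightarrow> ('a \<Rightarrow> 'b \<Rightarrow> real) \<Rightarrow> ('a \<Rightarrow> 'b \<Rightarrow> real) \<Rightarrow> real \<Rightarrow> 'b \<Rightarrow> real" where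
  "C_SBC Th \<phi> f s y = (\<integral>\<theta>. indicator {\<theta>. f \<theta> y \<le> s} \<theta> * \<phi> \<theta> y \<partial>Th)"

definition D_SBC :: "'a measure \<Rightarrow> ('a \<Rightarrow> 'b \<Rightarrow> real) \<Rightarrow> ('a \<Rightarrow> 'b \<Rightarrow> real) \<Rightarrow> real \<Rightarrow> 'b \<Rightarrow> real" where
  "D_SBC Th \<phi> f s y = (\<integral>\<theta>. indicator {\<theta>. f \<theta> y = s} \<theta> * \<phi> \<theta> y \<partial>Th)"

definition r_SBC :: "'a measure \<Rightarrow> ('a \<Rightarrow> 'b \<Rightarrow> real) \<Rightarrow> ('a \<Rightarrow> 'b \<Rightarrow> real) \<Rightarrow> real \<Rightarrow> 'a \<Rightarrow> 'b \<Rightarrow> real" where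
  "r_SBC Th \<phi> f x \<theta>t y =
     measure (uniform_measure lborel {0..1::real})
       {u. C_SBC Th \<phi> f (f \<theta>t y) y - u * D_SBC Th \<phi> f (f \<theta>t y) y \<le> x}"

definition q_SBC :: "'a measure \<Rightarrow> ('a \<Rightarrow> real) \<Rightarrow> ('b \<Rightarrow> 'a \<Rightarrow> real) \<Rightarrow> ('a \<Rightarrow> 'b \<Rightarrow> real) \<Rightarrow> ('a \<Rightarrow> 'b \<Rightarrow> real) \<Rightarrow> real \<Rightarrow> 'b \<Rightarrow> real" where
  "q_SBC Th prior obs \<phi> f x y = (\<integral>\<theta>t. post Th prior obs \<theta>t y * r_SBC Th \<phi> f x \<theta>t y \<partial>Th)"

definition passes_cont_SBC :: "'a measure \<Rightarrow> 'b measure \<Rightarrow> ('a \<Rightarrow> real) \<Rightarrow> ('b \<Rightarrow> 'a \<Rightarrow> real) \<Rightarrow> ('a \<Rightarrow> 'b \<Rightarrow> real) \<Rightarrow> ('a \<Rightarrow> 'b \<Rightarrow> real) \<Rightarrow> bool" where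
  "passes_cont_SBC Th Y prior obs \<phi> f \<longleftrightarrow>
     (\<forall>x \<in> {0..1}. (\<integral>y. q_SBC Th prior obs \<phi> f x y * marg Th prior obs y \<partial>Y) = x)"

end

theory Submission
  imports Defs
begin

text \<open>
  Both notions of calibration only see, for each \<open>y\<close>, the preorder that the test quantity
  induces on \<open>\<Theta>\<close>: \<open>C\<close>, \<open>D\<close>, \<open>N\<^sup>less\<close> and \<open>N\<^sup>equals\<close> are defined through comparisons of
  test values. A strictly increasing \<open>h\<^sub>y\<close> preserves this preorder, so all SBC quantities of
  \<open>f\<close> and \<open>g\<close> coincide. A strictly decreasing \<open>h\<^sub>y\<close> reverses it: then
  \<open>C\<^sub>f = 1 - C\<^sub>g + D\<^sub>g\<close> and \<open>D\<^sub>f = D\<^sub>g\<close>, and the substitution \<open>U \<mapsto> 1 - U\<close> turns the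
  randomised PIT of \<open>f\<close> into one minus the PIT of \<open>g\<close> with a strict inequality,
  \<open>r\<^sub>f(x) = 1 - r\<^sup><\<^sub>g(1 - x)\<close>. Since \<open>r\<^sub>g(s) \<le> r\<^sup><\<^sub>g(t) \<le> r\<^sub>g(t)\<close> for \<open>s < t\<close>, the strict PIT of
  a calibrated \<open>g\<close> is uniform as well. Likewise the randomised rank reflects,
  \<open>R\<^sub>f(i) = 1 - R\<^sub>g(M - 1 - i)\<close>, because draws below \<open>\<theta>\<^sup>~\<close> for \<open>f\<close> are draws above it for \<open>g\<close>.
  Averaging these identities over posterior and marginal transfers calibration from \<open>g\<close> to \<open>f\<close>.
\<close>

lemma borel_measurable_uncurried_compose:
  assumes "(\<lambda>(x, y). G x y) \<in> borel_measurable (A \<Otimes>\<^sub>M B)"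
    and "a \<in> measurable M A" and "b \<in> measurable M B"
  shows "(\<lambda>z. G (a z) (b z)) \<in> borel_measurable M"
  using measurable_compose[OF measurable_Pair[OF assms(2,3)] assms(1)] by simp

lemma borel_measurable_measure_slice:
  assumes "finite_measure N" and [measurable]: "Measurable.pred (M \<Otimes>\<^sub>M N) (\<lambda>(x, u). P x u)"
  shows "(\<lambda>x. measure N {u \<in> space N. P x u}) \<in> borel_measurable M"
proof -
  interpret N: finite_measure N by (rule assms(1))
  have "{p \<in> space (M \<Otimes>\<^sub>M N). case p of (x, u) \<Rightarrow> P x u} \<in> sets (M \<Otimes>\<^sub>M N)"
    by measurable
  then have "(\<lambda>x. emeasure N (Pair x -` {p \<in> space (M \<Otimes>\<^sub>M N). case p of (x, u) \<Rightarrow> P x u}))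
      \<in> borel_measurable M"
    by (rule N.measurable_emeasure_Pair)
  then show ?thesis
    unfolding measure_def
    by (rule borel_measurable_enn2real[OF measurable_cong[THEN iffD1], rotated])
       (auto simp: space_pair_measure)
qed

subsection \<open>The uniform distribution on the unit interval\<close>

abbreviation unif01 :: "real measure" where
  "unif01 \<equiv> uniform_measure lborel {0..1}"

lemma prob_space_unif01: "prob_space unif01"
  by (rule prob_space_uniform_measure) auto

lemma measure_unif01: "B \<in> sets borel \<Longrightarrow> measure unif01 B = measure lborel ({0..1} \<inter> B)"
  by (subst measure_uniform_measure) (auto simp: emeasure_lborel_Icc_eq)

lemma measure_unif01_affine_le:
  fixes a b x :: real
  assumes "b > 0"
  shows "measure unif01 {u. a - u * b \<le> x} = min 1 (max 0 (1 - (a - x) / b))"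
proof -
  have "{0..1} \<inter> {u. a - u * b \<le> x} = {max 0 ((a - x) / b)..1}"
    using assms by (auto simp: field_simps)
  then show ?thesis
    by (simp add: measure_unif01) (auto simp: min_def max_def)
qed

lemma measure_unif01_affine_less:
  fixes a b x :: real
  assumes "b > 0"
  shows "measure unif01 {u. a - u * b < x} = min 1 (max 0 (1 - (a - x) / b))"
proof -
  have "{0..1} \<inter> {u. a - u * b < x} = {0..1} \<inter> {(a - x) / b<..}"
    using assms by (auto simp: field_simps)
  also have "\<dots> = (if (a - x) / b < 0 then {0..1} else {(a - x) / b<..1})"
    by auto
  finally show ?thesis
    by (simp add: measure_unif01) (auto simp: min_def max_def)
qed

lemma measure_unif01_affine_reflect:
  fixes a b x :: real
  assumes "b \<ge> 0"
  shows "measure unif01 {u. (1 - a + b) - u * b \<le> x} = 1 - measure unif01 {u. a - u * b < 1 - x}"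
proof (cases "b = 0")
  case True
  then show ?thesis by (simp add: measure_unif01)
next
  case False
  with assms have b: "b > 0" by simp
  have "1 - (1 - a + b - x) / b = (a - (1 - x)) / b"
    using b by (simp add: field_simps)
  then show ?thesis
    unfolding measure_unif01_affine_le[OF b] measure_unif01_affine_less[OF b]
    by (simp add: min_def max_def)
qed

lemma measure_unif01_mono:
  assumes "Measurable.pred borel Q" and "\<And>u. P u \<Longrightarrow> Q u"
  shows "measure unif01 {u. P u} \<le> measure unif01 {u. Q u}"
proof -
  interpret prob_space unif01 by (rule prob_space_unif01)
  show ?thesis
    using assms by (intro finite_measure_mono) (auto simp: pred_def)
qed

lemma measure_unif01_le_1: "measure unif01 A \<le> 1"
  using prob_space.prob_le_1[OF prob_space_unif01] .

subsection \<open>The discrete uniform distribution of the tie-breaking variable\<close>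

lemma prob_pmf_of_set_shift_le:
  "measure_pmf.prob (pmf_of_set {0..E}) {k. L + k \<le> i}
     = (if real L \<le> real i then min (real E) (real i - real L) + 1 else 0) / (real E + 1)"
proof -
  have "{0..E} \<inter> {k. L + k \<le> i} = (if L \<le> i then {0..min E (i - L)} else {})"
    by auto
  then show ?thesis
    by (subst measure_pmf_of_set) (auto simp: min_def ac_simps)
qed

lemma prob_pmf_of_set_shift_le_reflect:
  fixes L L' E M i :: nat
  assumes "L + L' + E = M" and "i < M"
  shows "measure_pmf.prob (pmf_of_set {0..E}) {k. L + k \<le> i}
       = 1 - measure_pmf.prob (pmf_of_set {0..E}) {k. L' + k \<le> M - 1 - i}"
proof -
  have nat_dichotomy: "real a \<le> real b \<or> real b + 1 \<le> real a" for a b :: nat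
    using of_nat_le_iff[of "b + 1" a, where 'a = real] by linarith
  have "real L + real L' + real E = real M" "real (M - 1 - i) = real M - 1 - real i"
    using assms by simp_all
  then show ?thesis
    using nat_dichotomy[of L i] nat_dichotomy[of L' "M - 1 - i"]
    unfolding prob_pmf_of_set_shift_le by (auto simp: field_simps min_def)
qed

lemma card_less_plus_card_greater_plus_card_eq:
  fixes a :: "nat \<Rightarrow> 'a::linorder"
  shows "card {m \<in> {..<M}. a m < c} + card {m \<in> {..<M}. c < a m} + card {m \<in> {..<M}. a m = c} = M"
proof -
  have "card {m \<in> {..<M}. a m < c} + card {m \<in> {..<M}. c < a m} + card {m \<in> {..<M}. a m = c}
      = card (({m \<in> {..<M}. a m < c} \<union> {m \<in> {..<M}. c < a m}) \<union> {m \<in> {..<M}. a m = c})"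
    by (subst card_Un_disjoint; (subst card_Un_disjoint)?) auto
  also have "({m \<in> {..<M}. a m < c} \<union> {m \<in> {..<M}. c < a m}) \<union> {m \<in> {..<M}. a m = c} = {..<M}"
    by auto
  finally show ?thesis by simp
qed

subsection \<open>Comparisons of test values\<close>

lemma C_SBC_cong_level:
  assumes "\<And>\<theta>. \<theta> \<in> space Th \<Longrightarrow> F \<theta> y \<le> s \<longleftrightarrow> G \<theta> y \<le> t"
  shows "C_SBC Th \<phi> F s y = C_SBC Th \<phi> G t y"
  unfolding C_SBC_def using assms
  by (intro Bochner_Integration.integral_cong) (auto simp: indicator_def)

lemma D_SBC_cong_level:
  assumes "\<And>\<theta>. \<theta> \<in> space Th \<Longrightarrow> F \<theta> y = s \<longleftrightarrow> G \<theta> y = t"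
  shows "D_SBC Th \<phi> F s y = D_SBC Th \<phi> G t y"
  unfolding D_SBC_def using assms
  by (intro Bochner_Integration.integral_cong) (auto simp: indicator_def)

definition r_less_SBC :: "'a measure \<Rightarrow> ('a \<Rightarrow> 'b \<Rightarrow> real) \<Rightarrow> ('a \<Rightarrow> 'b \<Rightarrow> real) \<Rightarrow> real \<Rightarrow> 'a \<Rightarrow> 'b \<Rightarrow> real" where
  "r_less_SBC Th \<phi> f x \<theta>t y =
     measure unif01 {u. C_SBC Th \<phi> f (f \<theta>t y) y - u * D_SBC Th \<phi> f (f \<theta>t y) y < x}"

definition q_less_SBC :: "'a measure \<Rightarrow> ('a \<Rightarrow> real) \<Rightarrow> ('b \<Rightarrow> 'a \<Rightarrow> real) \<Rightarrow> ('a \<Rightarrow> 'b \<Rightarrow> real) \<Rightarrow> ('a \<Rightarrow> 'b \<Rightarrow> real) \<Rightarrow> real \<Rightarrow> 'b \<Rightarrow> real" where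
  "q_less_SBC Th prior obs \<phi> f x y = (\<integral>\<theta>t. post Th prior obs \<theta>t y * r_less_SBC Th \<phi> f x \<theta>t y \<partial>Th)"

lemma r_less_SBC_le_r_SBC: "r_less_SBC Th \<phi> f x \<theta>t y \<le> r_SBC Th \<phi> f x \<theta>t y"
  unfolding r_less_SBC_def r_SBC_def by (rule measure_unif01_mono) auto

lemma r_SBC_le_r_less_SBC: "s < x \<Longrightarrow> r_SBC Th \<phi> f s \<theta>t y \<le> r_less_SBC Th \<phi> f x \<theta>t y"
  unfolding r_less_SBC_def r_SBC_def by (rule measure_unif01_mono) auto

definition rank_cdf :: "nat \<Rightarrow> ('a \<Rightarrow> 'b \<Rightarrow> real) \<Rightarrow> nat \<Rightarrow> (nat \<Rightarrow> 'a) \<Rightarrow> 'a \<Rightarrow> 'b \<Rightarrow> real" where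
  "rank_cdf M f i \<theta>s \<theta>t y =
     measure_pmf.prob (pmf_of_set {0..N_equals M f \<theta>s \<theta>t y}) {k. N_less M f \<theta>s \<theta>t y + k \<le> i}"

lemma R_SBC_eq_integral_rank_cdf:
  "R_SBC Th \<phi> f M i \<theta>t y = (\<integral>\<theta>s. rank_cdf M f i \<theta>s \<theta>t y \<partial>sample_measure Th \<phi> M y)"
  unfolding R_SBC_def rank_cdf_def ..

lemma rank_cdf_nonneg: "0 \<le> rank_cdf M f i \<theta>s \<theta>t y"
  unfolding rank_cdf_def by simp

lemma rank_cdf_le_1: "rank_cdf M f i \<theta>s \<theta>t y \<le> 1"
  unfolding rank_cdf_def by simp

lemma rank_cdf_cong_order:
  assumes order: "\<And>\<theta> \<theta>'. \<theta> \<in> space Th \<Longrightarrow> \<theta>' \<in> space Th \<Longrightarrow> F \<theta> y \<le> F \<theta>' y \<longleftrightarrow> G \<theta> y \<le> G \<theta>' y"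
    and \<theta>t: "\<theta>t \<in> space Th" and \<theta>s: "\<And>m. m < M \<Longrightarrow> \<theta>s m \<in> space Th"
  shows "rank_cdf M F i \<theta>s \<theta>t y = rank_cdf M G i \<theta>s \<theta>t y"
proof -
  have less: "F (\<theta>s m) y < F \<theta>t y \<longleftrightarrow> G (\<theta>s m) y < G \<theta>t y"
    and eq: "F (\<theta>s m) y = F \<theta>t y \<longleftrightarrow> G (\<theta>s m) y = G \<theta>t y" if "m < M" for m
    using order[OF \<theta>t \<theta>s[OF that]] order[OF \<theta>s[OF that] \<theta>t]
    by (auto simp: order.eq_iff not_le[symmetric])
  have "N_less M F \<theta>s \<theta>t y = N_less M G \<theta>s \<theta>t y"
    unfolding N_less_def using less by (intro arg_cong[where f = card]) auto
  moreover have "N_equals M F \<theta>s \<theta>t y = N_equals M G \<theta>s \<theta>t y"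
    unfolding N_equals_def using eq by (intro arg_cong[where f = card]) auto
  ultimately show ?thesis
    unfolding rank_cdf_def by simp
qed

lemma rank_cdf_reverse:
  assumes reverse: "\<And>\<theta> \<theta>'. \<theta> \<in> space Th \<Longrightarrow> \<theta>' \<in> space Th \<Longrightarrow> F \<theta> y \<le> F \<theta>' y \<longleftrightarrow> G \<theta>' y \<le> G \<theta> y"
    and \<theta>t: "\<theta>t \<in> space Th" and \<theta>s: "\<And>m. m < M \<Longrightarrow> \<theta>s m \<in> space Th" and "i < M"
  shows "rank_cdf M F i \<theta>s \<theta>t y = 1 - rank_cdf M G (M - 1 - i) \<theta>s \<theta>t y"
proof -
  have less: "F (\<theta>s m) y < F \<theta>t y \<longleftrightarrow> G \<theta>t y < G (\<theta>s m) y"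
    and eq: "F (\<theta>s m) y = F \<theta>t y \<longleftrightarrow> G (\<theta>s m) y = G \<theta>t y" if "m < M" for m
    using reverse[OF \<theta>t \<theta>s[OF that]] reverse[OF \<theta>s[OF that] \<theta>t]
    by (auto simp: order.eq_iff not_le[symmetric])
  have N_less: "N_less M F \<theta>s \<theta>t y = card {m \<in> {..<M}. G \<theta>t y < G (\<theta>s m) y}"
    unfolding N_less_def using less by (intro arg_cong[where f = card]) auto
  have N_equals: "N_equals M F \<theta>s \<theta>t y = N_equals M G \<theta>s \<theta>t y"
    unfolding N_equals_def using eq by (intro arg_cong[where f = card]) auto
  have "N_less M F \<theta>s \<theta>t y + N_less M G \<theta>s \<theta>t y + N_equals M G \<theta>s \<theta>t y = M"
    using card_less_plus_card_greater_plus_card_eq[where a = "\<lambda>m. G (\<theta>s m) y" and c = "G \<theta>t y" and M = M]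
    unfolding N_less by (simp add: N_less_def N_equals_def ac_simps)
  then show ?thesis
    unfolding rank_cdf_def N_equals by (rule prob_pmf_of_set_shift_le_reflect[OF _ \<open>i < M\<close>])
qed

lemma sample_measure_component_in_space:
  "\<theta>s \<in> space (sample_measure Th \<phi> M y) \<Longrightarrow> m < M \<Longrightarrow> \<theta>s m \<in> space Th"
  unfolding sample_measure_def space_PiM by auto

subsection \<open>Order-preserving transformations\<close>

lemma passes_cont_SBC_cong_order:
  assumes order: "\<And>y \<theta> \<theta>'. y \<in> space Y \<Longrightarrow> \<theta> \<in> space Th \<Longrightarrow> \<theta>' \<in> space Th \<Longrightarrow>
      F \<theta> y \<le> F \<theta>' y \<longleftrightarrow> G \<theta> y \<le> G \<theta>' y"
  shows "passes_cont_SBC Th Y prior obs \<phi> F \<longleftrightarrow> passes_cont_SBC Th Y prior obs \<phi> G"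
proof -
  have r: "r_SBC Th \<phi> F x \<theta>t y = r_SBC Th \<phi> G x \<theta>t y"
    if y: "y \<in> space Y" and \<theta>t: "\<theta>t \<in> space Th" for x \<theta>t y
  proof -
    have "C_SBC Th \<phi> F (F \<theta>t y) y = C_SBC Th \<phi> G (G \<theta>t y) y"
      using order[OF y _ \<theta>t] by (rule C_SBC_cong_level)
    moreover have "D_SBC Th \<phi> F (F \<theta>t y) y = D_SBC Th \<phi> G (G \<theta>t y) y"
      using order[OF y _ \<theta>t] order[OF y \<theta>t] by (intro D_SBC_cong_level) (auto simp: order.eq_iff)
    ultimately show ?thesis
      unfolding r_SBC_def by simp
  qed
  have "q_SBC Th prior obs \<phi> F x y = q_SBC Th prior obs \<phi> G x y" if "y \<in> space Y" for x y
    unfolding q_SBC_def using r that by (intro Bochner_Integration.integral_cong) auto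
  then show ?thesis
    unfolding passes_cont_SBC_def by (simp cong: Bochner_Integration.integral_cong)
qed

lemma passes_M_SBC_cong_order:
  assumes order: "\<And>y \<theta> \<theta>'. y \<in> space Y \<Longrightarrow> \<theta> \<in> space Th \<Longrightarrow> \<theta>' \<in> space Th \<Longrightarrow>
      F \<theta> y \<le> F \<theta>' y \<longleftrightarrow> G \<theta> y \<le> G \<theta>' y"
  shows "passes_M_SBC Th Y prior obs \<phi> M F \<longleftrightarrow> passes_M_SBC Th Y prior obs \<phi> M G"
proof -
  have "rank_cdf M F i \<theta>s \<theta>t y = rank_cdf M G i \<theta>s \<theta>t y"
    if "y \<in> space Y" "\<theta>t \<in> space Th" "\<theta>s \<in> space (sample_measure Th \<phi> M y)" for i \<theta>s \<theta>t y
    using order[OF that(1)] that(2) sample_measure_component_in_space[OF that(3)]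
    by (rule rank_cdf_cong_order)
  then have R: "R_SBC Th \<phi> F M i \<theta>t y = R_SBC Th \<phi> G M i \<theta>t y"
    if "y \<in> space Y" "\<theta>t \<in> space Th" for i \<theta>t y
    unfolding R_SBC_eq_integral_rank_cdf using that by (intro Bochner_Integration.integral_cong) auto
  have "Q_SBC Th prior obs \<phi> F M i y = Q_SBC Th prior obs \<phi> G M i y" if "y \<in> space Y" for i y
    unfolding Q_SBC_def using R that by (intro Bochner_Integration.integral_cong) auto
  then show ?thesis
    unfolding passes_M_SBC_def by (simp cong: Bochner_Integration.integral_cong)
qed

subsection \<open>Posterior averages\<close>

locale sbc_model =
  fixes Th :: "'a measure" and Y :: "'b measure"
    and prior :: "'a \<Rightarrow> real" and obs :: "'b \<Rightarrow> 'a \<Rightarrow> real"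
    and \<phi> :: "'a \<Rightarrow> 'b \<Rightarrow> real"
  assumes sigma_finite_Th: "sigma_finite_measure Th" and sigma_finite_Y: "sigma_finite_measure Y"
    and prior_meas: "prior \<in> borel_measurable Th"
    and prior_nonneg: "\<forall>\<theta>\<in>space Th. prior \<theta> \<ge> 0"
    and prior_norm: "(\<integral>\<theta>. prior \<theta> \<partial>Th) = 1"
    and obs_meas: "(\<lambda>(y, \<theta>). obs y \<theta>) \<in> borel_measurable (Y \<Otimes>\<^sub>M Th)"
    and obs_nonneg: "\<forall>y\<in>space Y. \<forall>\<theta>\<in>space Th. obs y \<theta> \<ge> 0"
    and obs_norm: "\<forall>\<theta>\<in>space Th. (\<integral>y. obs y \<theta> \<partial>Y) = 1"
    and phi_meas: "(\<lambda>(\<theta>, y). \<phi> \<theta> y) \<in> borel_measurable (Th \<Otimes>\<^sub>M Y)"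
    and phi_nonneg: "\<forall>y\<in>space Y. \<forall>\<theta>\<in>space Th. \<phi> \<theta> y \<ge> 0"
    and phi_norm: "\<forall>y\<in>space Y. (\<integral>\<theta>. \<phi> \<theta> y \<partial>Th) = 1"
begin

sublocale Th: sigma_finite_measure Th by (rule sigma_finite_Th)
sublocale Y: sigma_finite_measure Y by (rule sigma_finite_Y)
sublocale Y_Th: pair_sigma_finite Y Th ..

abbreviation marginal :: "'b \<Rightarrow> real" where
  "marginal \<equiv> marg Th prior obs"

abbreviation posterior :: "'a \<Rightarrow> 'b \<Rightarrow> real" where
  "posterior \<equiv> post Th prior obs"

lemmas prior_measurable[measurable] = prior_meas
lemmas obs_measurable[measurable (raw)] = borel_measurable_uncurried_compose[OF obs_meas]
lemmas phi_measurable[measurable (raw)] = borel_measurable_uncurried_compose[OF phi_meas]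

lemma marginal_measurable[measurable]: "marginal \<in> borel_measurable Y"
  unfolding marg_def by measurable

lemma posterior_measurable[measurable (raw)]:
  assumes [measurable]: "a \<in> measurable M Th" "b \<in> measurable M Y"
  shows "(\<lambda>z. posterior (a z) (b z)) \<in> borel_measurable M"
  unfolding post_def by measurable

lemma marginal_nonneg: "y \<in> space Y \<Longrightarrow> 0 \<le> marginal y"
  unfolding marg_def using obs_nonneg prior_nonneg by (auto intro!: Bochner_Integration.integral_nonneg)

lemma posterior_nonneg: "y \<in> space Y \<Longrightarrow> \<theta> \<in> space Th \<Longrightarrow> 0 \<le> posterior \<theta> y"
  unfolding post_def using obs_nonneg prior_nonneg marginal_nonneg by auto

lemma integrable_phi: "y \<in> space Y \<Longrightarrow> integrable Th (\<lambda>\<theta>. \<phi> \<theta> y)"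
  using phi_norm not_integrable_integral_eq by fastforce

lemma integrable_joint: "integrable (Y \<Otimes>\<^sub>M Th) (\<lambda>(y, \<theta>). obs y \<theta> * prior \<theta>)"
proof (rule integrableI_nonneg)
  show "AE p in Y \<Otimes>\<^sub>M Th. 0 \<le> (case p of (y, \<theta>) \<Rightarrow> obs y \<theta> * prior \<theta>)"
    using obs_nonneg prior_nonneg by (auto simp: space_pair_measure)
  have obs_nn_integral: "(\<integral>\<^sup>+ y. ennreal (obs y \<theta>) \<partial>Y) = 1" if "\<theta> \<in> space Th" for \<theta>
  proof -
    have "integrable Y (\<lambda>y. obs y \<theta>)"
      using that obs_norm not_integrable_integral_eq by fastforce
    then show ?thesis
      using that obs_nonneg obs_norm by (subst nn_integral_eq_integral) auto
  qed
  have "(\<integral>\<^sup>+ p. ennreal (case p of (y, \<theta>) \<Rightarrow> obs y \<theta> * prior \<theta>) \<partial>(Y \<Otimes>\<^sub>M Th))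
      = (\<integral>\<^sup>+ \<theta>. (\<integral>\<^sup>+ y. ennreal (prior \<theta>) * ennreal (obs y \<theta>) \<partial>Y) \<partial>Th)"
    by (subst Y_Th.nn_integral_snd[symmetric])
       (auto simp: ennreal_mult' mult.commute prior_nonneg intro!: nn_integral_cong)
  also have "\<dots> = (\<integral>\<^sup>+ \<theta>. ennreal (prior \<theta>) \<partial>Th)"
    by (intro nn_integral_cong) (simp add: nn_integral_cmult obs_nn_integral)
  also have "\<dots> = 1"
    using prior_norm prior_nonneg not_integrable_integral_eq
    by (subst nn_integral_eq_integral) fastforce+
  finally show "(\<integral>\<^sup>+ p. ennreal (case p of (y, \<theta>) \<Rightarrow> obs y \<theta> * prior \<theta>) \<partial>(Y \<Otimes>\<^sub>M Th)) < \<infinity>"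
    by simp
qed measurable

lemma integrable_marginal: "integrable Y marginal"
  unfolding marg_def using Y_Th.integrable_fst[OF integrable_joint] by simp

lemma integral_marginal: "(\<integral>y. marginal y \<partial>Y) = 1"
proof -
  have "(\<integral>y. marginal y \<partial>Y) = (\<integral>\<theta>. (\<integral>y. obs y \<theta> * prior \<theta> \<partial>Y) \<partial>Th)"
    unfolding marg_def using Y_Th.Fubini_integral[OF integrable_joint] by simp
  also have "\<dots> = (\<integral>\<theta>. prior \<theta> \<partial>Th)"
    using obs_norm by (intro Bochner_Integration.integral_cong) auto
  finally show ?thesis
    using prior_norm by simp
qed

lemma integrable_posterior: "y \<in> space Y \<Longrightarrow> integrable Th (\<lambda>\<theta>. posterior \<theta> y)"
  unfolding post_def marg_def using not_integrable_integral_eq by fastforce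

lemma integral_posterior: "marginal y \<noteq> 0 \<Longrightarrow> (\<integral>\<theta>. posterior \<theta> y \<partial>Th) = 1"
  unfolding post_def by (simp add: marg_def)

lemma integrable_posterior_mult:
  assumes y: "y \<in> space Y" and [measurable]: "\<psi> \<in> borel_measurable Th"
    and \<psi>: "\<And>\<theta>. \<theta> \<in> space Th \<Longrightarrow> 0 \<le> \<psi> \<theta> \<and> \<psi> \<theta> \<le> 1"
  shows "integrable Th (\<lambda>\<theta>. posterior \<theta> y * \<psi> \<theta>)"
proof (rule Bochner_Integration.integrable_bound[OF integrable_posterior[OF y]])
  show "(\<lambda>\<theta>. posterior \<theta> y * \<psi> \<theta>) \<in> borel_measurable Th"
    using y by measurable
  show "AE \<theta> in Th. norm (posterior \<theta> y * \<psi> \<theta>) \<le> norm (posterior \<theta> y)"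
    using \<psi> posterior_nonneg[OF y] by (intro AE_I2) (auto simp: abs_mult intro!: mult_left_le)
qed

lemma integrable_posterior_average:
  assumes \<psi>_meas: "(\<lambda>(\<theta>, y). \<psi> \<theta> y) \<in> borel_measurable (Th \<Otimes>\<^sub>M Y)"
    and \<psi>: "\<And>\<theta> y. \<theta> \<in> space Th \<Longrightarrow> y \<in> space Y \<Longrightarrow> 0 \<le> \<psi> \<theta> y \<and> \<psi> \<theta> y \<le> 1"
  shows "integrable Y (\<lambda>y. (\<integral>\<theta>. posterior \<theta> y * \<psi> \<theta> y \<partial>Th) * marginal y)"
proof (rule Bochner_Integration.integrable_bound[OF integrable_marginal])
  note borel_measurable_uncurried_compose[OF \<psi>_meas, measurable (raw)]
  show "(\<lambda>y. (\<integral>\<theta>. posterior \<theta> y * \<psi> \<theta> y \<partial>Th) * marginal y) \<in> borel_measurable Y"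
    by measurable
  have "\<bar>\<integral>\<theta>. posterior \<theta> y * \<psi> \<theta> y \<partial>Th\<bar> * marginal y \<le> marginal y" if y: "y \<in> space Y" for y
  proof (cases "marginal y = 0")
    case False
    have "(\<lambda>\<theta>. \<psi> \<theta> y) \<in> borel_measurable Th"
      using y by measurable
    then have "(\<integral>\<theta>. posterior \<theta> y * \<psi> \<theta> y \<partial>Th) \<le> (\<integral>\<theta>. posterior \<theta> y \<partial>Th)"
      using \<psi> y posterior_nonneg[OF y]
      by (intro Bochner_Integration.integral_mono integrable_posterior_mult integrable_posterior) (auto intro: mult_left_le)
    moreover have "0 \<le> (\<integral>\<theta>. posterior \<theta> y * \<psi> \<theta> y \<partial>Th)"
      using \<psi> y posterior_nonneg[OF y] by (intro Bochner_Integration.integral_nonneg) auto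
    ultimately show ?thesis
      using integral_posterior[OF False] marginal_nonneg[OF y] by (simp add: mult_left_le_one_le)
  qed simp
  then show "AE y in Y. norm ((\<integral>\<theta>. posterior \<theta> y * \<psi> \<theta> y \<partial>Th) * marginal y) \<le> norm (marginal y)"
    using marginal_nonneg by (intro AE_I2) (simp add: abs_mult)
qed

lemma integral_posterior_average_mono:
  assumes \<psi>\<^sub>1_meas: "(\<lambda>(\<theta>, y). \<psi>\<^sub>1 \<theta> y) \<in> borel_measurable (Th \<Otimes>\<^sub>M Y)"
    and \<psi>\<^sub>2_meas: "(\<lambda>(\<theta>, y). \<psi>\<^sub>2 \<theta> y) \<in> borel_measurable (Th \<Otimes>\<^sub>M Y)"
    and \<psi>\<^sub>1: "\<And>\<theta> y. \<theta> \<in> space Th \<Longrightarrow> y \<in> space Y \<Longrightarrow> 0 \<le> \<psi>\<^sub>1 \<theta> y \<and> \<psi>\<^sub>1 \<theta> y \<le> 1"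
    and \<psi>\<^sub>2: "\<And>\<theta> y. \<theta> \<in> space Th \<Longrightarrow> y \<in> space Y \<Longrightarrow> 0 \<le> \<psi>\<^sub>2 \<theta> y \<and> \<psi>\<^sub>2 \<theta> y \<le> 1"
    and le: "\<And>\<theta> y. \<theta> \<in> space Th \<Longrightarrow> y \<in> space Y \<Longrightarrow> \<psi>\<^sub>1 \<theta> y \<le> \<psi>\<^sub>2 \<theta> y"
  shows "(\<integral>y. (\<integral>\<theta>. posterior \<theta> y * \<psi>\<^sub>1 \<theta> y \<partial>Th) * marginal y \<partial>Y)
       \<le> (\<integral>y. (\<integral>\<theta>. posterior \<theta> y * \<psi>\<^sub>2 \<theta> y \<partial>Th) * marginal y \<partial>Y)"
proof (intro Bochner_Integration.integral_mono integrable_posterior_average[OF \<psi>\<^sub>1_meas \<psi>\<^sub>1] integrable_posterior_average[OF \<psi>\<^sub>2_meas \<psi>\<^sub>2])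
  note borel_measurable_uncurried_compose[OF \<psi>\<^sub>1_meas, measurable (raw)]
    borel_measurable_uncurried_compose[OF \<psi>\<^sub>2_meas, measurable (raw)]
  fix y assume y: "y \<in> space Y"
  have "(\<integral>\<theta>. posterior \<theta> y * \<psi>\<^sub>1 \<theta> y \<partial>Th) \<le> (\<integral>\<theta>. posterior \<theta> y * \<psi>\<^sub>2 \<theta> y \<partial>Th)"
    using y \<psi>\<^sub>1 \<psi>\<^sub>2 le posterior_nonneg[OF y]
    by (intro Bochner_Integration.integral_mono integrable_posterior_mult) (auto intro: mult_left_mono)
  then show "(\<integral>\<theta>. posterior \<theta> y * \<psi>\<^sub>1 \<theta> y \<partial>Th) * marginal y \<le> (\<integral>\<theta>. posterior \<theta> y * \<psi>\<^sub>2 \<theta> y \<partial>Th) * marginal y"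
    using marginal_nonneg[OF y] by (rule mult_right_mono)
qed

lemma posterior_average_complement:
  assumes y: "y \<in> space Y" and \<psi>: "integrable Th (\<lambda>\<theta>. posterior \<theta> y * \<psi> \<theta>)"
    and \<rho>: "\<And>\<theta>. \<theta> \<in> space Th \<Longrightarrow> \<rho> \<theta> = 1 - \<psi> \<theta>"
  shows "(\<integral>\<theta>. posterior \<theta> y * \<rho> \<theta> \<partial>Th) * marginal y
       = marginal y - (\<integral>\<theta>. posterior \<theta> y * \<psi> \<theta> \<partial>Th) * marginal y"
proof (cases "marginal y = 0")
  case False
  have "(\<integral>\<theta>. posterior \<theta> y * \<rho> \<theta> \<partial>Th) = (\<integral>\<theta>. posterior \<theta> y - posterior \<theta> y * \<psi> \<theta> \<partial>Th)"
    using \<rho> by (intro Bochner_Integration.integral_cong) (auto simp: right_diff_distrib)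
  also have "\<dots> = 1 - (\<integral>\<theta>. posterior \<theta> y * \<psi> \<theta> \<partial>Th)"
    using integrable_posterior[OF y] \<psi> integral_posterior[OF False] by simp
  finally show ?thesis
    by (simp add: left_diff_distrib)
qed simp

lemma integral_marginal_complement:
  assumes "integrable Y (\<lambda>y. A y * marginal y)"
    and "\<And>y. y \<in> space Y \<Longrightarrow> B y * marginal y = marginal y - A y * marginal y"
  shows "(\<integral>y. B y * marginal y \<partial>Y) = 1 - (\<integral>y. A y * marginal y \<partial>Y)"
proof -
  have "(\<integral>y. B y * marginal y \<partial>Y) = (\<integral>y. marginal y - A y * marginal y \<partial>Y)"
    using assms(2) by (intro Bochner_Integration.integral_cong) auto
  also have "\<dots> = 1 - (\<integral>y. A y * marginal y \<partial>Y)"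
    using integrable_marginal assms(1) integral_marginal by simp
  finally show ?thesis .
qed

subsection \<open>Continuous SBC under an order-reversing transformation\<close>

lemma D_SBC_nonneg: "y \<in> space Y \<Longrightarrow> 0 \<le> D_SBC Th \<phi> F s y"
  unfolding D_SBC_def using phi_nonneg by (auto intro!: Bochner_Integration.integral_nonneg)

lemma borel_measurable_r_SBC:
  assumes F_meas: "(\<lambda>(\<theta>, y). F \<theta> y) \<in> borel_measurable (Th \<Otimes>\<^sub>M Y)"
  shows "(\<lambda>(\<theta>t, y). r_SBC Th \<phi> F x \<theta>t y) \<in> borel_measurable (Th \<Otimes>\<^sub>M Y)"
    and "(\<lambda>(\<theta>t, y). r_less_SBC Th \<phi> F x \<theta>t y) \<in> borel_measurable (Th \<Otimes>\<^sub>M Y)"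
proof -
  note borel_measurable_uncurried_compose[OF F_meas, measurable (raw)]
  let ?C = "\<lambda>p. C_SBC Th \<phi> F (F (fst p) (snd p)) (snd p)"
  let ?D = "\<lambda>p. D_SBC Th \<phi> F (F (fst p) (snd p)) (snd p)"
  have [measurable]: "?C \<in> borel_measurable (Th \<Otimes>\<^sub>M Y)"
    unfolding C_SBC_def indicator_def by measurable
  have [measurable]: "?D \<in> borel_measurable (Th \<Otimes>\<^sub>M Y)"
    unfolding D_SBC_def indicator_def by measurable
  have finite: "finite_measure unif01"
    by (rule prob_space.axioms(1)[OF prob_space_unif01])
  show "(\<lambda>(\<theta>t, y). r_SBC Th \<phi> F x \<theta>t y) \<in> borel_measurable (Th \<Otimes>\<^sub>M Y)"
    using borel_measurable_measure_slice[OF finite, where M = "Th \<Otimes>\<^sub>M Y" and P = "\<lambda>p u. ?C p - u * ?D p \<le> x"]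
    by (simp add: r_SBC_def split_beta')
  show "(\<lambda>(\<theta>t, y). r_less_SBC Th \<phi> F x \<theta>t y) \<in> borel_measurable (Th \<Otimes>\<^sub>M Y)"
    using borel_measurable_measure_slice[OF finite, where M = "Th \<Otimes>\<^sub>M Y" and P = "\<lambda>p u. ?C p - u * ?D p < x"]
    by (simp add: r_less_SBC_def split_beta')
qed

lemma r_SBC_bounds: "0 \<le> r_SBC Th \<phi> F x \<theta>t y \<and> r_SBC Th \<phi> F x \<theta>t y \<le> 1"
  and r_less_SBC_bounds: "0 \<le> r_less_SBC Th \<phi> F x \<theta>t y \<and> r_less_SBC Th \<phi> F x \<theta>t y \<le> 1"
  unfolding r_SBC_def r_less_SBC_def by (intro conjI measure_nonneg measure_unif01_le_1)+

lemma integral_q_less_SBC: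
  assumes G_meas: "(\<lambda>(\<theta>, y). G \<theta> y) \<in> borel_measurable (Th \<Otimes>\<^sub>M Y)"
    and passes: "passes_cont_SBC Th Y prior obs \<phi> G" and t: "t \<in> {0..1}"
  shows "(\<integral>y. q_less_SBC Th prior obs \<phi> G t y * marginal y \<partial>Y) = t"
proof -
  let ?I = "\<integral>y. q_less_SBC Th prior obs \<phi> G t y * marginal y \<partial>Y"
  have upper: "?I \<le> t"
  proof -
    have "?I \<le> (\<integral>y. q_SBC Th prior obs \<phi> G t y * marginal y \<partial>Y)"
      unfolding q_less_SBC_def q_SBC_def
      by (rule integral_posterior_average_mono[OF borel_measurable_r_SBC(2,1)[OF G_meas]
            r_less_SBC_bounds r_SBC_bounds r_less_SBC_le_r_SBC])
    then show ?thesis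
      using passes t unfolding passes_cont_SBC_def by simp
  qed
  have lower: "s \<le> ?I" if "0 \<le> s" "s < t" for s
  proof -
    have "(\<integral>y. q_SBC Th prior obs \<phi> G s y * marginal y \<partial>Y) \<le> ?I"
      unfolding q_less_SBC_def q_SBC_def
      by (rule integral_posterior_average_mono[OF borel_measurable_r_SBC(1,2)[OF G_meas]
            r_SBC_bounds r_less_SBC_bounds r_SBC_le_r_less_SBC[OF \<open>s < t\<close>]])
    then show ?thesis
      using passes that t unfolding passes_cont_SBC_def by simp
  qed
  show ?thesis
  proof (cases "t = 0")
    case True
    have "0 \<le> ?I"
      unfolding q_less_SBC_def using r_less_SBC_bounds posterior_nonneg marginal_nonneg
      by (intro Bochner_Integration.integral_nonneg mult_nonneg_nonneg) auto
    with upper True show ?thesis by simp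
  next
    case False
    with t have "0 < t" by simp
    then have "t \<le> ?I"
      by (rule dense_le_bounded) (rule lower; simp)
    with upper show ?thesis by simp
  qed
qed

lemma integrable_indicator_mult_phi:
  assumes y: "y \<in> space Y" and [measurable]: "Measurable.pred Th P"
  shows "integrable Th (\<lambda>\<theta>. indicator {\<theta>. P \<theta>} \<theta> * \<phi> \<theta> y)"
proof (rule Bochner_Integration.integrable_bound[OF integrable_phi[OF y]])
  show "(\<lambda>\<theta>. indicator {\<theta>. P \<theta>} \<theta> * \<phi> \<theta> y) \<in> borel_measurable Th"
    unfolding indicator_def using y by measurable
qed (auto simp: indicator_def)

lemma C_SBC_reverse:
  assumes G_meas: "(\<lambda>(\<theta>, y). G \<theta> y) \<in> borel_measurable (Th \<Otimes>\<^sub>M Y)"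
    and reverse: "\<And>\<theta> \<theta>'. \<theta> \<in> space Th \<Longrightarrow> \<theta>' \<in> space Th \<Longrightarrow> F \<theta> y \<le> F \<theta>' y \<longleftrightarrow> G \<theta>' y \<le> G \<theta> y"
    and y: "y \<in> space Y" and \<theta>t: "\<theta>t \<in> space Th"
  shows "C_SBC Th \<phi> F (F \<theta>t y) y = 1 - C_SBC Th \<phi> G (G \<theta>t y) y + D_SBC Th \<phi> G (G \<theta>t y) y"
proof -
  note borel_measurable_uncurried_compose[OF G_meas, measurable (raw)]
  define s where "s = G \<theta>t y"
  have int_ge: "integrable Th (\<lambda>\<theta>. indicator {\<theta>. s \<le> G \<theta> y} \<theta> * \<phi> \<theta> y)"
    and int_le: "integrable Th (\<lambda>\<theta>. indicator {\<theta>. G \<theta> y \<le> s} \<theta> * \<phi> \<theta> y)"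
    and int_eq: "integrable Th (\<lambda>\<theta>. indicator {\<theta>. G \<theta> y = s} \<theta> * \<phi> \<theta> y)"
    using y by (intro integrable_indicator_mult_phi; measurable)+
  have "C_SBC Th \<phi> F (F \<theta>t y) y = (\<integral>\<theta>. indicator {\<theta>. s \<le> G \<theta> y} \<theta> * \<phi> \<theta> y \<partial>Th)"
    unfolding C_SBC_def s_def using reverse[OF _ \<theta>t]
    by (intro Bochner_Integration.integral_cong) (auto simp: indicator_def)
  moreover
  have "(\<integral>\<theta>. indicator {\<theta>. s \<le> G \<theta> y} \<theta> * \<phi> \<theta> y + indicator {\<theta>. G \<theta> y \<le> s} \<theta> * \<phi> \<theta> y \<partial>Th)
      = (\<integral>\<theta>. \<phi> \<theta> y + indicator {\<theta>. G \<theta> y = s} \<theta> * \<phi> \<theta> y \<partial>Th)"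
    by (intro Bochner_Integration.integral_cong) (auto simp: indicator_def)
  then have "(\<integral>\<theta>. indicator {\<theta>. s \<le> G \<theta> y} \<theta> * \<phi> \<theta> y \<partial>Th) + C_SBC Th \<phi> G s y = 1 + D_SBC Th \<phi> G s y"
    unfolding C_SBC_def D_SBC_def
    using int_ge int_le int_eq integrable_phi[OF y] phi_norm y by simp
  ultimately show ?thesis
    unfolding s_def by simp
qed

lemma r_SBC_reverse:
  assumes G_meas: "(\<lambda>(\<theta>, y). G \<theta> y) \<in> borel_measurable (Th \<Otimes>\<^sub>M Y)"
    and reverse: "\<And>\<theta> \<theta>'. \<theta> \<in> space Th \<Longrightarrow> \<theta>' \<in> space Th \<Longrightarrow> F \<theta> y \<le> F \<theta>' y \<longleftrightarrow> G \<theta>' y \<le> G \<theta> y"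
    and y: "y \<in> space Y" and \<theta>t: "\<theta>t \<in> space Th"
  shows "r_SBC Th \<phi> F x \<theta>t y = 1 - r_less_SBC Th \<phi> G (1 - x) \<theta>t y"
proof -
  have C: "C_SBC Th \<phi> F (F \<theta>t y) y = 1 - C_SBC Th \<phi> G (G \<theta>t y) y + D_SBC Th \<phi> G (G \<theta>t y) y"
    using G_meas reverse y \<theta>t by (rule C_SBC_reverse)
  have D: "D_SBC Th \<phi> F (F \<theta>t y) y = D_SBC Th \<phi> G (G \<theta>t y) y"
    using reverse[OF _ \<theta>t] reverse[OF \<theta>t] by (intro D_SBC_cong_level) (auto simp: order.eq_iff)
  have "r_SBC Th \<phi> F x \<theta>t y = measure unif01
      {u. (1 - C_SBC Th \<phi> G (G \<theta>t y) y + D_SBC Th \<phi> G (G \<theta>t y) y) - u * D_SBC Th \<phi> G (G \<theta>t y) y \<le> x}"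
    unfolding r_SBC_def C D ..
  also have "\<dots> = 1 - r_less_SBC Th \<phi> G (1 - x) \<theta>t y"
    unfolding r_less_SBC_def by (rule measure_unif01_affine_reflect[OF D_SBC_nonneg[OF y]])
  finally show ?thesis .
qed

lemma passes_cont_SBC_of_reverse:
  assumes G_meas: "(\<lambda>(\<theta>, y). G \<theta> y) \<in> borel_measurable (Th \<Otimes>\<^sub>M Y)"
    and reverse: "\<And>y \<theta> \<theta>'. y \<in> space Y \<Longrightarrow> \<theta> \<in> space Th \<Longrightarrow> \<theta>' \<in> space Th \<Longrightarrow>
      F \<theta> y \<le> F \<theta>' y \<longleftrightarrow> G \<theta>' y \<le> G \<theta> y"
    and passes: "passes_cont_SBC Th Y prior obs \<phi> G"
  shows "passes_cont_SBC Th Y prior obs \<phi> F"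
  unfolding passes_cont_SBC_def
proof
  fix x :: real assume x: "x \<in> {0..1}"
  note r_less_meas = borel_measurable_r_SBC(2)[OF G_meas, of "1 - x"]
  have "(\<integral>y. q_SBC Th prior obs \<phi> F x y * marginal y \<partial>Y)
      = 1 - (\<integral>y. q_less_SBC Th prior obs \<phi> G (1 - x) y * marginal y \<partial>Y)"
  proof (rule integral_marginal_complement)
    show "integrable Y (\<lambda>y. q_less_SBC Th prior obs \<phi> G (1 - x) y * marginal y)"
      unfolding q_less_SBC_def by (rule integrable_posterior_average[OF r_less_meas r_less_SBC_bounds])
    fix y assume y: "y \<in> space Y"
    have "(\<lambda>\<theta>t. r_less_SBC Th \<phi> G (1 - x) \<theta>t y) \<in> borel_measurable Th"
      using borel_measurable_uncurried_compose[OF r_less_meas, where a = "\<lambda>\<theta>. \<theta>" and b = "\<lambda>_. y"] y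
      by simp
    then show "q_SBC Th prior obs \<phi> F x y * marginal y
        = marginal y - q_less_SBC Th prior obs \<phi> G (1 - x) y * marginal y"
      unfolding q_SBC_def q_less_SBC_def
      using y reverse r_less_SBC_bounds
      by (intro posterior_average_complement integrable_posterior_mult r_SBC_reverse[OF G_meas]) auto
  qed
  also have "\<dots> = x"
    using integral_q_less_SBC[OF G_meas passes, of "1 - x"] x by simp
  finally show "(\<integral>y. q_SBC Th prior obs \<phi> F x y * marginal y \<partial>Y) = x" .
qed

subsection \<open>M-sample SBC under an order-reversing transformation\<close>

lemma prob_space_sample_measure:
  assumes y: "y \<in> space Y"
  shows "prob_space (sample_measure Th \<phi> M y)"
  unfolding sample_measure_def
proof (intro prob_space_PiM prob_spaceI)
  have "(\<lambda>\<theta>. \<phi> \<theta> y) \<in> borel_measurable Th"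
    using y by measurable
  then have "emeasure (density Th (\<lambda>\<theta>. ennreal (\<phi> \<theta> y))) (space Th) = (\<integral>\<^sup>+ \<theta>. ennreal (\<phi> \<theta> y) \<partial>Th)"
    by (subst emeasure_density) (auto intro!: nn_integral_cong)
  also have "\<dots> = 1"
    using integrable_phi[OF y] phi_nonneg phi_norm y by (subst nn_integral_eq_integral) auto
  finally show "emeasure (density Th (\<lambda>\<theta>. ennreal (\<phi> \<theta> y))) (space (density Th (\<lambda>\<theta>. ennreal (\<phi> \<theta> y)))) = 1"
    by simp
qed

lemma measurable_sample_component:
  assumes "m < M"
  shows "(\<lambda>\<theta>s. \<theta>s m) \<in> measurable (sample_measure Th \<phi> M y) Th"
proof -
  have "(\<lambda>\<theta>s. \<theta>s m) \<in> measurable (sample_measure Th \<phi> M y) (density Th (\<lambda>\<theta>. ennreal (\<phi> \<theta> y)))"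
    unfolding sample_measure_def using assms by (intro measurable_component_singleton) simp
  then show ?thesis
    by (simp add: measurable_cong_sets[OF refl sets_density])
qed

lemma borel_measurable_rank_cdf:
  assumes F_meas: "(\<lambda>(\<theta>, y). F \<theta> y) \<in> borel_measurable (Th \<Otimes>\<^sub>M Y)" and y: "y \<in> space Y"
  shows "(\<lambda>(\<theta>t, \<theta>s). rank_cdf M F i \<theta>s \<theta>t y) \<in> borel_measurable (Th \<Otimes>\<^sub>M sample_measure Th \<phi> M y)"
proof -
  let ?S = "sample_measure Th \<phi> M y"
  let ?less = "\<lambda>p. \<Sum>m<M. of_bool (F (snd p m) y < F (fst p) y) :: real"
  let ?equal = "\<lambda>p. \<Sum>m<M. of_bool (F (snd p m) y = F (fst p) y) :: real"
  have F_y: "(\<lambda>\<theta>. F \<theta> y) \<in> borel_measurable Th"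
    using borel_measurable_uncurried_compose[OF F_meas, where a = "\<lambda>\<theta>. \<theta>" and b = "\<lambda>_. y"] y by simp
  have [measurable]: "(\<lambda>p. F (fst p) y) \<in> borel_measurable (Th \<Otimes>\<^sub>M ?S)"
    using measurable_compose[OF measurable_fst F_y] .
  have F_draw: "(\<lambda>p. F (snd p m) y) \<in> borel_measurable (Th \<Otimes>\<^sub>M ?S)" if "m \<in> {..<M}" for m
    using measurable_compose[OF measurable_compose[OF measurable_snd measurable_sample_component] F_y] that
    by simp
  have [measurable]: "?less \<in> borel_measurable (Th \<Otimes>\<^sub>M ?S)" "?equal \<in> borel_measurable (Th \<Otimes>\<^sub>M ?S)"
    by (intro borel_measurable_sum; unfold of_bool_def; use F_draw in measurable)+
  have rank_cdf_eq: "(\<lambda>(\<theta>t, \<theta>s). rank_cdf M F i \<theta>s \<theta>t y)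
      = (\<lambda>p. (if ?less p \<le> real i then min (?equal p) (real i - ?less p) + 1 else 0) / (?equal p + 1))"
    by (auto simp: rank_cdf_def prob_pmf_of_set_shift_le N_less_def N_equals_def Int_def)
  show ?thesis
    unfolding rank_cdf_eq by measurable
qed

lemma borel_measurable_R_SBC:
  assumes F_meas: "(\<lambda>(\<theta>, y). F \<theta> y) \<in> borel_measurable (Th \<Otimes>\<^sub>M Y)" and y: "y \<in> space Y"
  shows "(\<lambda>\<theta>t. R_SBC Th \<phi> F M i \<theta>t y) \<in> borel_measurable Th"
proof -
  interpret S: prob_space "sample_measure Th \<phi> M y"
    using y by (rule prob_space_sample_measure)
  show ?thesis
    unfolding R_SBC_eq_integral_rank_cdf
    by (rule S.borel_measurable_lebesgue_integral[OF borel_measurable_rank_cdf[OF F_meas y]])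
qed

lemma integrable_rank_cdf:
  assumes F_meas: "(\<lambda>(\<theta>, y). F \<theta> y) \<in> borel_measurable (Th \<Otimes>\<^sub>M Y)"
    and y: "y \<in> space Y" and \<theta>t: "\<theta>t \<in> space Th"
  shows "integrable (sample_measure Th \<phi> M y) (\<lambda>\<theta>s. rank_cdf M F i \<theta>s \<theta>t y)"
proof -
  interpret S: prob_space "sample_measure Th \<phi> M y"
    using y by (rule prob_space_sample_measure)
  have "(\<lambda>\<theta>s. rank_cdf M F i \<theta>s \<theta>t y) \<in> borel_measurable (sample_measure Th \<phi> M y)"
    using measurable_compose[OF measurable_Pair1'[OF \<theta>t] borel_measurable_rank_cdf[OF F_meas y]] by simp
  then show ?thesis
    by (intro S.integrable_const_bound[where B = 1]) (auto simp: rank_cdf_nonneg rank_cdf_le_1)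
qed

lemma R_SBC_bounds:
  assumes F_meas: "(\<lambda>(\<theta>, y). F \<theta> y) \<in> borel_measurable (Th \<Otimes>\<^sub>M Y)"
    and y: "y \<in> space Y" and \<theta>t: "\<theta>t \<in> space Th"
  shows "0 \<le> R_SBC Th \<phi> F M i \<theta>t y \<and> R_SBC Th \<phi> F M i \<theta>t y \<le> 1"
proof -
  interpret S: prob_space "sample_measure Th \<phi> M y"
    using y by (rule prob_space_sample_measure)
  have "R_SBC Th \<phi> F M i \<theta>t y \<le> (\<integral>\<theta>s. 1 \<partial>sample_measure Th \<phi> M y)"
    unfolding R_SBC_eq_integral_rank_cdf
    by (intro Bochner_Integration.integral_mono integrable_rank_cdf[OF F_meas y \<theta>t]) (auto simp: rank_cdf_le_1)
  moreover have "0 \<le> R_SBC Th \<phi> F M i \<theta>t y"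
    unfolding R_SBC_eq_integral_rank_cdf by (intro Bochner_Integration.integral_nonneg) (simp add: rank_cdf_nonneg)
  ultimately show ?thesis
    by (simp add: S.prob_space)
qed

lemma R_SBC_reverse:
  assumes G_meas: "(\<lambda>(\<theta>, y). G \<theta> y) \<in> borel_measurable (Th \<Otimes>\<^sub>M Y)"
    and reverse: "\<And>\<theta> \<theta>'. \<theta> \<in> space Th \<Longrightarrow> \<theta>' \<in> space Th \<Longrightarrow> F \<theta> y \<le> F \<theta>' y \<longleftrightarrow> G \<theta>' y \<le> G \<theta> y"
    and y: "y \<in> space Y" and \<theta>t: "\<theta>t \<in> space Th" and "i < M"
  shows "R_SBC Th \<phi> F M i \<theta>t y = 1 - R_SBC Th \<phi> G M (M - 1 - i) \<theta>t y"
proof -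
  interpret S: prob_space "sample_measure Th \<phi> M y"
    using y by (rule prob_space_sample_measure)
  have "rank_cdf M F i \<theta>s \<theta>t y = 1 - rank_cdf M G (M - 1 - i) \<theta>s \<theta>t y"
    if "\<theta>s \<in> space (sample_measure Th \<phi> M y)" for \<theta>s
    using reverse \<theta>t sample_measure_component_in_space[OF that] \<open>i < M\<close> by (rule rank_cdf_reverse)
  then have "R_SBC Th \<phi> F M i \<theta>t y
      = (\<integral>\<theta>s. 1 - rank_cdf M G (M - 1 - i) \<theta>s \<theta>t y \<partial>sample_measure Th \<phi> M y)"
    unfolding R_SBC_eq_integral_rank_cdf by (intro Bochner_Integration.integral_cong) auto
  also have "\<dots> = 1 - R_SBC Th \<phi> G M (M - 1 - i) \<theta>t y"
    unfolding R_SBC_eq_integral_rank_cdf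
    using integrable_rank_cdf[OF G_meas y \<theta>t] S.prob_space by simp
  finally show ?thesis .
qed

lemma passes_M_SBC_of_reverse:
  assumes G_meas: "(\<lambda>(\<theta>, y). G \<theta> y) \<in> borel_measurable (Th \<Otimes>\<^sub>M Y)"
    and reverse: "\<And>y \<theta> \<theta>'. y \<in> space Y \<Longrightarrow> \<theta> \<in> space Th \<Longrightarrow> \<theta>' \<in> space Th \<Longrightarrow>
      F \<theta> y \<le> F \<theta>' y \<longleftrightarrow> G \<theta>' y \<le> G \<theta> y"
    and passes: "passes_M_SBC Th Y prior obs \<phi> M G"
  shows "passes_M_SBC Th Y prior obs \<phi> M F"
  unfolding passes_M_SBC_def
proof (intro allI impI)
  fix i assume "i < M"
  define j where "j = M - 1 - i"
  have G_j: "(\<integral>y. Q_SBC Th prior obs \<phi> G M j y * marginal y \<partial>Y) = (real j + 1) / (real M + 1)"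
    using passes \<open>i < M\<close> unfolding passes_M_SBC_def j_def by simp
  have "(\<integral>y. Q_SBC Th prior obs \<phi> F M i y * marginal y \<partial>Y)
      = 1 - (\<integral>y. Q_SBC Th prior obs \<phi> G M j y * marginal y \<partial>Y)"
  proof (rule integral_marginal_complement)
    \<comment> \<open>Non-integrable functions have integral \<open>0\<close>, and \<open>(j + 1) / (M + 1) \<noteq> 0\<close>.\<close>
    show "integrable Y (\<lambda>y. Q_SBC Th prior obs \<phi> G M j y * marginal y)"
      using G_j not_integrable_integral_eq by fastforce
    fix y assume y: "y \<in> space Y"
    have "integrable Th (\<lambda>\<theta>t. posterior \<theta>t y * R_SBC Th \<phi> G M j \<theta>t y)"
      using y borel_measurable_R_SBC[OF G_meas y] R_SBC_bounds[OF G_meas y]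
      by (rule integrable_posterior_mult)
    then show "Q_SBC Th prior obs \<phi> F M i y * marginal y = marginal y - Q_SBC Th prior obs \<phi> G M j y * marginal y"
      unfolding Q_SBC_def j_def using y reverse \<open>i < M\<close>
      by (intro posterior_average_complement R_SBC_reverse[OF G_meas]) auto
  qed
  also have "\<dots> = (real i + 1) / (real M + 1)"
    using G_j \<open>i < M\<close> unfolding j_def by (simp add: field_simps)
  finally show "(\<integral>y. Q_SBC Th prior obs \<phi> F M i y * marginal y \<partial>Y) = (real i + 1) / (real M + 1)" .
qed

lemma passes_cont_SBC_reverse_iff:
  assumes F_meas: "(\<lambda>(\<theta>, y). F \<theta> y) \<in> borel_measurable (Th \<Otimes>\<^sub>M Y)"
    and G_meas: "(\<lambda>(\<theta>, y). G \<theta> y) \<in> borel_measurable (Th \<Otimes>\<^sub>M Y)"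
    and reverse: "\<And>y \<theta> \<theta>'. y \<in> space Y \<Longrightarrow> \<theta> \<in> space Th \<Longrightarrow> \<theta>' \<in> space Th \<Longrightarrow>
      F \<theta> y \<le> F \<theta>' y \<longleftrightarrow> G \<theta>' y \<le> G \<theta> y"
  shows "passes_cont_SBC Th Y prior obs \<phi> F \<longleftrightarrow> passes_cont_SBC Th Y prior obs \<phi> G"
proof
  assume "passes_cont_SBC Th Y prior obs \<phi> G"
  with G_meas reverse show "passes_cont_SBC Th Y prior obs \<phi> F"
    by (rule passes_cont_SBC_of_reverse)
next
  have reverse': "\<And>y \<theta> \<theta>'. y \<in> space Y \<Longrightarrow> \<theta> \<in> space Th \<Longrightarrow> \<theta>' \<in> space Th \<Longrightarrow>
      G \<theta> y \<le> G \<theta>' y \<longleftrightarrow> F \<theta>' y \<le> F \<theta> y"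
    using reverse by blast
  assume "passes_cont_SBC Th Y prior obs \<phi> F"
  with F_meas reverse' show "passes_cont_SBC Th Y prior obs \<phi> G"
    by (rule passes_cont_SBC_of_reverse)
qed

lemma passes_M_SBC_reverse_iff:
  assumes F_meas: "(\<lambda>(\<theta>, y). F \<theta> y) \<in> borel_measurable (Th \<Otimes>\<^sub>M Y)"
    and G_meas: "(\<lambda>(\<theta>, y). G \<theta> y) \<in> borel_measurable (Th \<Otimes>\<^sub>M Y)"
    and reverse: "\<And>y \<theta> \<theta>'. y \<in> space Y \<Longrightarrow> \<theta> \<in> space Th \<Longrightarrow> \<theta>' \<in> space Th \<Longrightarrow>
      F \<theta> y \<le> F \<theta>' y \<longleftrightarrow> G \<theta>' y \<le> G \<theta> y"
  shows "passes_M_SBC Th Y prior obs \<phi> M F \<longleftrightarrow> passes_M_SBC Th Y prior obs \<phi> M G"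
proof
  assume "passes_M_SBC Th Y prior obs \<phi> M G"
  with G_meas reverse show "passes_M_SBC Th Y prior obs \<phi> M F"
    by (rule passes_M_SBC_of_reverse)
next
  have reverse': "\<And>y \<theta> \<theta>'. y \<in> space Y \<Longrightarrow> \<theta> \<in> space Th \<Longrightarrow> \<theta>' \<in> space Th \<Longrightarrow>
      G \<theta> y \<le> G \<theta>' y \<longleftrightarrow> F \<theta>' y \<le> F \<theta> y"
    using reverse by blast
  assume "passes_M_SBC Th Y prior obs \<phi> M F"
  with F_meas reverse' show "passes_M_SBC Th Y prior obs \<phi> M G"
    by (rule passes_M_SBC_of_reverse)
qed

end

theorem theorem8:
  fixes Th :: "'a measure" and Y :: "'b measure"
    and prior :: "'a \<Rightarrow> real" and obs :: "'b \<Rightarrow> 'a \<Rightarrow> real"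
    and \<phi> f g :: "'a \<Rightarrow> 'b \<Rightarrow> real" and h :: "'b \<Rightarrow> real \<Rightarrow> real"
  assumes sfTh: "sigma_finite_measure Th" and sfY: "sigma_finite_measure Y"
    and prior_meas: "prior \<in> borel_measurable Th"
    and prior_nonneg: "\<forall>\<theta>\<in>space Th. prior \<theta> \<ge> 0"
    and prior_norm: "(\<integral>\<theta>. prior \<theta> \<partial>Th) = 1"
    and obs_meas: "(\<lambda>(y, \<theta>). obs y \<theta>) \<in> borel_measurable (Y \<Otimes>\<^sub>M Th)"
    and obs_nonneg: "\<forall>y\<in>space Y. \<forall>\<theta>\<in>space Th. obs y \<theta> \<ge> 0"
    and obs_norm: "\<forall>\<theta>\<in>space Th. (\<integral>y. obs y \<theta> \<partial>Y) = 1"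
    and phi_meas: "(\<lambda>(\<theta>, y). \<phi> \<theta> y) \<in> borel_measurable (Th \<Otimes>\<^sub>M Y)"
    and phi_nonneg: "\<forall>y\<in>space Y. \<forall>\<theta>\<in>space Th. \<phi> \<theta> y \<ge> 0"
    and phi_norm: "\<forall>y\<in>space Y. (\<integral>\<theta>. \<phi> \<theta> y \<partial>Th) = 1"
    and f_meas: "(\<lambda>(\<theta>, y). f \<theta> y) \<in> borel_measurable (Th \<Otimes>\<^sub>M Y)"
    and g_meas: "(\<lambda>(\<theta>, y). g \<theta> y) \<in> borel_measurable (Th \<Otimes>\<^sub>M Y)"
    and h_meas: "\<forall>y\<in>space Y. h y \<in> borel_measurable borel"
    and fgh: "\<forall>y\<in>space Y. \<forall>\<theta>\<in>space Th. f \<theta> y = h y (g \<theta> y)"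
    and h_mono: "(\<forall>y\<in>space Y. strict_mono (h y))
               \<or> (\<forall>y\<in>space Y. \<forall>a b. a < b \<longrightarrow> h y b < h y a)"
  shows "(passes_cont_SBC Th Y prior obs \<phi> f \<longleftrightarrow> passes_cont_SBC Th Y prior obs \<phi> g)
       \<and> (\<forall>M::nat. passes_M_SBC Th Y prior obs \<phi> M f \<longleftrightarrow> passes_M_SBC Th Y prior obs \<phi> M g)"
proof -
  interpret sbc_model Th Y prior obs \<phi>
    using sfTh sfY prior_meas prior_nonneg prior_norm obs_meas obs_nonneg obs_norm
      phi_meas phi_nonneg phi_norm
    by (rule sbc_model.intro)
  from h_mono show ?thesis
  proof
    assume "\<forall>y\<in>space Y. strict_mono (h y)"
    then have order: "\<And>y \<theta> \<theta>'. y \<in> space Y \<Longrightarrow> \<theta> \<in> space Th \<Longrightarrow> \<theta>' \<in> space Th \<Longrightarrow>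
        f \<theta> y \<le> f \<theta>' y \<longleftrightarrow> g \<theta> y \<le> g \<theta>' y"
      using fgh by (simp add: strict_mono_less_eq)
    have "passes_cont_SBC Th Y prior obs \<phi> f \<longleftrightarrow> passes_cont_SBC Th Y prior obs \<phi> g"
      using order by (rule passes_cont_SBC_cong_order)
    moreover have "passes_M_SBC Th Y prior obs \<phi> M f \<longleftrightarrow> passes_M_SBC Th Y prior obs \<phi> M g" for M
      using order by (rule passes_M_SBC_cong_order)
    ultimately show ?thesis by blast
  next
    assume "\<forall>y\<in>space Y. \<forall>a b. a < b \<longrightarrow> h y b < h y a"
    then have antitone: "strict_mono (\<lambda>x. - h y x)" if "y \<in> space Y" for y
      using that by (auto intro: strict_monoI)
    have reverse: "\<And>y \<theta> \<theta>'. y \<in> space Y \<Longrightarrow> \<theta> \<in> space Th \<Longrightarrow> \<theta>' \<in> space Th \<Longrightarrow>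
        f \<theta> y \<le> f \<theta>' y \<longleftrightarrow> g \<theta>' y \<le> g \<theta> y"
      using strict_mono_less_eq[OF antitone] fgh by simp
    have "passes_cont_SBC Th Y prior obs \<phi> f \<longleftrightarrow> passes_cont_SBC Th Y prior obs \<phi> g"
      using f_meas g_meas reverse by (rule passes_cont_SBC_reverse_iff)
    moreover have "passes_M_SBC Th Y prior obs \<phi> M f \<longleftrightarrow> passes_M_SBC Th Y prior obs \<phi> M g" for M
      using f_meas g_meas reverse by (rule passes_M_SBC_reverse_iff)
    ultimately show ?thesis by blast
  qed
qed

end
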